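(* Let $(c_{a,b})_{(a,b)\in I}$ be arbitrary real numbers indexed by $I=\{(a,b): b=1,2,\dots;\ a=b+1,\dots,2b\}$, and let $\beta=\sum_{n\ge1}\alpha_n s^n$ be the unique formal power series in $s$ (with zero constant term) satisfying \[ \beta=s\Big[1+\sum_{(a,b)\in I}c_{a,b}\,\beta^a s^{b-a}\Big]. \] Then, with $\mathbb N=\{0,1,2,\dots\}$ and $S_n:=\{(n_{a,b})\in\mathbb N^I: n=1+\sum_{I} b\,n_{a,b}\}$, \[ \alpha_n=\sum_{(n_{a,b})\in S_n}\frac{\big[\sum_I a\,n_{a,b}\big]!}{\big[\prod_I n_{a,b}!\big]\,\big[1+\sum_I (a-1)n_{a,b}\big]!}\prod_I c_{a,b}^{\,n_{a,b}}. \]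
   Context: Only finitely many $n_{a,b}$ are nonzero for elements of $S_n$, so all sums and products are finite. Note $b-a<0$ on $I$ but since $a\le 2b$ the right side of the defining equation, after substituting a series $\beta=s+O(s^2)$, is a well-defined formal power series in $s$. *)

theory Defs
  imports "HOL-Analysis.Analysis" "HOL-Computational_Algebra.Formal_Power_Series"
begin

definition idx_I :: "(nat \<times> nat) set" where
  "idx_I = {(a, b). 1 \<le> b \<and> b + 1 \<le> a \<and> a \<le> 2 * b}"

definition supp_fam :: "(nat \<times> nat \<Rightarrow> nat) \<Rightarrow> (nat \<times> nat) set" where
  "supp_fam m = {p. m p \<noteq> 0}"

text \<open>S_n: finitely supported families in N^I (represented as functions vanishing
  outside I) with n = 1 + sum_I b n_{a,b}.  Sums over I are taken over the finite support.\<close>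
definition S_set :: "nat \<Rightarrow> (nat \<times> nat \<Rightarrow> nat) set" where
  "S_set n = {m. supp_fam m \<subseteq> idx_I \<and> finite (supp_fam m) \<and>
                 n = 1 + (\<Sum>(a, b)\<in>supp_fam m. b * m (a, b))}"

text \<open>The term c_{a,b} beta^a s^{b-a} (with b - a < 0), as a formal power series:
  beta^a divided by s^(a-b).\<close>
definition eq_term :: "(nat \<times> nat \<Rightarrow> real) \<Rightarrow> real fps \<Rightarrow> nat \<times> nat \<Rightarrow> real fps" where
  "eq_term c \<beta> p = (case p of (a, b) \<Rightarrow> fps_const (c (a, b)) * (\<beta> ^ a / fps_X ^ (a - b)))"

end

theory Submission
  imports Defs "HOL-Combinatorics.Multiset_Permutations"
begin

(* The coefficient formula is proved by a combinatorial form of Lagrange inversion.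

   (1) The defining equation determines beta through a finite recursion on its
       coefficients (coeff_rec), and this recursion has a unique solution.
   (2) Words over the alphabet {leaf} + I, where the letter (a,b) is a node with a
       children and size b, encode plane trees in preorder (Lukasiewicz words): a word
       encodes a forest of k trees iff its walk with steps -1 (leaf) and a-1 (node)
       first reaches level -k at its end.  Weighting node (a,b) by c_{a,b} s^b, the
       generating function of k-forests is the k-th power of that of trees, and
       s times the tree series satisfies the recursion of (1), hence equals beta.
   (3) By the cycle lemma, a word of total step -1 has exactly one rotation that is
       a tree; so among the arrangements of a fixed multiset of letters exactly a
       fraction 1/length are trees.  For the letter multiset given by (n_{a,b}) this
       count is the multinomial coefficient in the formula divided by its length.
   The theorem follows by grouping the trees of size n-1 by their node counts. *)

no_notation vec_nth (infixl "$" 90)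
notation fps_nth (infixl "$" 75)


section \<open>The coefficient recursion\<close>

text \<open>The indices of I that can contribute to the coefficient of s^(n+1).\<close>
definition idx_upto :: "nat \<Rightarrow> (nat \<times> nat) set" where
  "idx_upto n = {p \<in> idx_I. snd p \<le> n}"

lemma finite_idx_upto: "finite (idx_upto n)"
proof -
  have "idx_upto n \<subseteq> {..2*n} \<times> {..n}" by (auto simp: idx_upto_def idx_I_def)
  thus ?thesis by (rule finite_subset) auto
qed

lemma fps_power_nth_agree:
  fixes f g :: "'a::comm_ring_1 fps"
  assumes f0: "f $ 0 = 0" and g0: "g $ 0 = 0" and agree: "\<forall>i<m. f $ i = g $ i"
    and "p + 1 < m + a"
  shows "(f ^ a) $ p = (g ^ a) $ p"
  using assms(4)
proof (induction a arbitrary: p)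
  case 0 then show ?case by simp
next
  case (Suc a)
  have "f $ i * (f ^ a) $ (p - i) = g $ i * (g ^ a) $ (p - i)" if "i \<le> p" for i
  proof -
    consider "i = 0" | "0 < i" "i < m" | "m \<le> i" by linarith
    then show ?thesis
    proof cases
      case 1 then show ?thesis using f0 g0 by simp
    next
      case 2
      then have "p - i + 1 < m + a" using Suc.prems that by auto
      then show ?thesis using Suc.IH agree 2 by simp
    next
      case 3
      then have "p - i < a" using Suc.prems that by auto
      then show ?thesis using startsby_zero_power_prefix[OF f0] startsby_zero_power_prefix[OF g0]
        by simp
    qed
  qed
  then show ?case by (simp add: fps_mult_nth)
qed

text \<open>Coefficientwise form of beta = s (1 + sum_I c_{a,b} beta^a s^(b-a)).\<close>
definition coeff_rec :: "(nat \<times> nat \<Rightarrow> real) \<Rightarrow> real fps \<Rightarrow> bool" where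
  "coeff_rec c f \<longleftrightarrow> f $ 0 = 0 \<and> (\<forall>n. f $ Suc n = (if n = 0 then 1 else 0) +
      (\<Sum>p\<in>idx_upto n. c p * (f ^ fst p) $ (n + fst p - snd p)))"

text \<open>The right-hand side only involves coefficients of index at most n, since b \<ge> 1.\<close>
lemma coeff_rec_unique:
  assumes "coeff_rec c f" "coeff_rec c g"
  shows "f = g"
proof -
  have f0: "f $ 0 = 0" and g0: "g $ 0 = 0" using assms by (auto simp: coeff_rec_def)
  have "\<forall>i<m. f $ i = g $ i" for m
  proof (induction m)
    case 0 then show ?case by simp
  next
    case (Suc m)
    have "f $ m = g $ m"
    proof (cases m)
      case 0 then show ?thesis using f0 g0 by simp
    next
      case (Suc n)
      have "(\<Sum>p\<in>idx_upto n. c p * (f ^ fst p) $ (n + fst p - snd p)) =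
            (\<Sum>p\<in>idx_upto n. c p * (g ^ fst p) $ (n + fst p - snd p))"
      proof (rule sum.cong)
        fix p assume "p \<in> idx_upto n"
        then have "1 \<le> snd p" "snd p \<le> n" by (auto simp: idx_upto_def idx_I_def)
        then show "c p * (f ^ fst p) $ (n + fst p - snd p) = c p * (g ^ fst p) $ (n + fst p - snd p)"
          using fps_power_nth_agree[OF f0 g0 Suc.IH] Suc by simp
      qed simp
      then show ?thesis using assms Suc by (simp add: coeff_rec_def)
    qed
    then show ?case using Suc.IH less_Suc_eq by auto
  qed
  then show ?thesis by (intro fps_ext) blast
qed

lemma eq_term_nth:
  "eq_term c \<beta> p $ n = c p * (\<beta> ^ fst p) $ (n + (fst p - snd p))"
  by (cases p) (simp add: eq_term_def fps_divide_def fps_X_power_subdegree fps_X_power_unit_factor)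

lemma has_sum_eq_term_nth:
  assumes \<beta>0: "\<beta> $ 0 = 0" and hs: "(eq_term c \<beta> has_sum T) idx_I"
  shows "T $ n = (\<Sum>p\<in>idx_upto n. c p * (\<beta> ^ fst p) $ (n + fst p - snd p))"
proof -
  have add: "Modules.additive (\<lambda>g::real fps. g $ n)"
    by (simp add: Modules.additive_def)
  have cont: "(\<lambda>g::real fps. g $ n) \<midarrow>T\<rightarrow> T $ n"
    by (rule tendsto_eventually, rule eventually_at_filter[THEN iffD2],
        rule eventually_mono[OF eventually_fps_nth_eq_nhds_fps]) auto
  have "((\<lambda>p. eq_term c \<beta> p $ n) has_sum T $ n) idx_I"
    using has_sum_comm_additive[OF add cont hs] by (simp add: o_def)
  moreover have "((\<lambda>p. eq_term c \<beta> p $ n) has_sum (\<Sum>p\<in>idx_upto n. eq_term c \<beta> p $ n)) idx_I"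
  proof (rule has_sum_cong_neutral[THEN iffD1, OF _ _ _ has_sum_finite[OF finite_idx_upto]])
    fix p assume "p \<in> idx_I - idx_upto n"
    then have "n + (fst p - snd p) < fst p" by (auto simp: idx_upto_def idx_I_def)
    then show "eq_term c \<beta> p $ n = 0"
      by (simp add: eq_term_nth startsby_zero_power_prefix[OF \<beta>0])
  qed (auto simp: idx_upto_def)
  ultimately have "T $ n = (\<Sum>p\<in>idx_upto n. eq_term c \<beta> p $ n)"
    by (rule has_sum_unique)
  also have "\<dots> = (\<Sum>p\<in>idx_upto n. c p * (\<beta> ^ fst p) $ (n + fst p - snd p))"
    by (rule sum.cong) (auto simp: eq_term_nth idx_upto_def idx_I_def)
  finally show ?thesis .
qed

lemma coeff_rec_beta:
  assumes "\<beta> $ 0 = 0" "(eq_term c \<beta> has_sum T) idx_I" "\<beta> = fps_X * (1 + T)"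
  shows "coeff_rec c \<beta>"
  unfolding coeff_rec_def
proof (intro conjI allI)
  show "\<beta> $ 0 = 0" by fact
  fix n show "\<beta> $ Suc n = (if n = 0 then 1 else 0) +
      (\<Sum>p\<in>idx_upto n. c p * (\<beta> ^ fst p) $ (n + fst p - snd p))"
    by (subst assms(3)) (simp add: has_sum_eq_term_nth[OF assms(1,2)])
qed


section \<open>First-passage walks and Lukasiewicz words\<close>

definition first_passage :: "int \<Rightarrow> int list \<Rightarrow> bool" where
  "first_passage k xs \<longleftrightarrow> sum_list xs = - k \<and> (\<forall>j<length xs. sum_list (take j xs) > - k)"

lemma first_passage_0: "first_passage 0 xs \<longleftrightarrow> xs = []"
  by (cases xs) (auto simp: first_passage_def)

lemma first_passage_Cons_1:
  "first_passage 1 (x # xs) \<longleftrightarrow> (x = -1 \<and> xs = []) \<or> (x \<ge> 0 \<and> first_passage (x + 1) xs)"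
proof -
  have "first_passage 1 (x # xs) \<longleftrightarrow>
      x + sum_list xs = -1 \<and> (\<forall>i<length xs. x + sum_list (take i xs) \<ge> 0)"
    unfolding first_passage_def by (auto simp: less_Suc_eq_0_disj)
  also have "\<dots> \<longleftrightarrow> (x = -1 \<and> xs = []) \<or> (x \<ge> 0 \<and> first_passage (x + 1) xs)"
  proof (cases xs)
    case (Cons y ys)
    have "(\<forall>i<length xs. x + sum_list (take i xs) \<ge> 0) \<longleftrightarrow>
        x \<ge> 0 \<and> (\<forall>i<length xs. sum_list (take i xs) > - (x + 1))"
      using Cons by force
    then show ?thesis using Cons by (auto simp: first_passage_def)
  qed (auto simp: first_passage_def)
  finally show ?thesis .
qed

lemma first_passage_append:
  assumes "first_passage 1 u" "first_passage k v" "k \<ge> 0"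
  shows "first_passage (k + 1) (u @ v)"
  unfolding first_passage_def
proof safe
  show "sum_list (u @ v) = - (k + 1)" using assms by (simp add: first_passage_def)
  fix j assume j: "j < length (u @ v)"
  show "- (k + 1) < sum_list (take j (u @ v))"
  proof (cases "j < length u")
    case True
    then have "sum_list (take j u) > -1" using assms(1) by (simp add: first_passage_def)
    then show ?thesis using True assms(3) by simp
  next
    case False
    then have "sum_list (take (j - length u) v) > -k"
      using j assms(2) by (simp add: first_passage_def)
    then show ?thesis using False assms(1) by (simp add: first_passage_def)
  qed
qed

lemma first_passage_prefix_unique:
  assumes "first_passage 1 u" "first_passage 1 u'" "u @ v = u' @ v'"
  shows "u = u'"
proof -
  have False if "length u < length u'" "first_passage 1 u" "first_passage 1 u'" "u @ v = u' @ v'"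
    for u u' v v' :: "int list"
  proof -
    have "take (length u) u' = u" using that(4) that(1)
      by (metis append_eq_append_conv_if append_eq_conv_conj less_imp_le_nat take_all_iff take_take)
    then have "sum_list (take (length u) u') = -1" using that(2) by (simp add: first_passage_def)
    with that(1,3) show False by (force simp: first_passage_def)
  qed
  then have "length u = length u'" using assms by (metis linorder_neqE_nat)
  then show ?thesis using assms(3) by (simp add: append_eq_append_conv)
qed

text \<open>With steps \<ge> -1 the walk cannot jump over a level, so a first passage to -(k+1)
  splits at its first visit of -1.\<close>
lemma first_passage_split:
  assumes fp: "first_passage (k + 1) xs" and "k \<ge> 0" and steps: "\<forall>x\<in>set xs. x \<ge> -1"
  shows "\<exists>u v. xs = u @ v \<and> first_passage 1 u \<and> first_passage k v"
proof -
  define P where "P i \<longleftrightarrow> sum_list (take i xs) \<le> -1" for i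
  have "P (length xs)" using fp assms(2) by (simp add: first_passage_def P_def)
  define i where "i = (LEAST i. P i)"
  have Pi: "P i" unfolding i_def by (rule LeastI) fact
  have before: "\<not> P j" if "j < i" for j using that not_less_Least i_def by blast
  have ile: "i \<le> length xs" using Least_le \<open>P (length xs)\<close> i_def by blast
  obtain i' where i': "i = Suc i'" using Pi by (cases i) (auto simp: P_def)
  have "sum_list (take i xs) \<ge> sum_list (take i' xs) - 1"
    using steps i' ile by (simp add: take_Suc_conv_app_nth)
  moreover have "sum_list (take i' xs) > -1" using before[of i'] i' by (simp add: P_def)
  ultimately have si: "sum_list (take i xs) = -1" using Pi by (simp add: P_def)
  have "first_passage 1 (take i xs)"
    unfolding first_passage_def using si before by (auto simp: P_def not_le)
  moreover have "first_passage k (drop i xs)" unfolding first_passage_def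
  proof safe
    have "sum_list xs = sum_list (take i xs) + sum_list (drop i xs)"
      by (metis append_take_drop_id sum_list_append)
    then show "sum_list (drop i xs) = - k" using si fp by (simp add: first_passage_def)
    fix j assume "j < length (drop i xs)"
    then have "sum_list (take (i + j) xs) > -(k+1)" using fp by (simp add: first_passage_def)
    moreover have "take (i + j) xs = take i xs @ take j (drop i xs)" by (simp add: take_add)
    ultimately show "- k < sum_list (take j (drop i xs))" using si by simp
  qed
  ultimately show ?thesis by (metis append_take_drop_id)
qed

text \<open>Letters: None is a leaf, Some (a,b) a node with a children contributing c_{a,b} s^b.\<close>
type_synonym letter = "(nat \<times> nat) option"

definition step :: "letter \<Rightarrow> int" where
  "step x = (case x of None \<Rightarrow> -1 | Some p \<Rightarrow> int (fst p) - 1)"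

definition letter_size :: "letter \<Rightarrow> nat" where
  "letter_size x = (case x of None \<Rightarrow> 0 | Some p \<Rightarrow> snd p)"

definition admissible :: "letter \<Rightarrow> bool" where
  "admissible x = (case x of None \<Rightarrow> True | Some p \<Rightarrow> p \<in> idx_I)"

text \<open>w is the preorder (Lukasiewicz) word of a forest of k trees.\<close>
definition forest :: "nat \<Rightarrow> letter list \<Rightarrow> bool" where
  "forest k w \<longleftrightarrow> (\<forall>x\<in>set w. admissible x) \<and> first_passage (int k) (map step w)"

lemma forest_0: "forest 0 w \<longleftrightarrow> w = []"
  by (auto simp: forest_def first_passage_0)

lemma forest_Cons_1:
  "forest 1 (x # w) \<longleftrightarrow> (x = None \<and> w = []) \<or> (\<exists>p. x = Some p \<and> p \<in> idx_I \<and> forest (fst p) w)"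
proof (cases x)
  case None then show ?thesis
    by (auto simp: forest_def first_passage_Cons_1 step_def admissible_def)
next
  case (Some p)
  show ?thesis
  proof (cases "p \<in> idx_I")
    case True
    then have "step x \<ge> 0" "step x + 1 = int (fst p)" using Some by (auto simp: step_def idx_I_def)
    then show ?thesis using Some True
      by (auto simp: first_passage_Cons_1 admissible_def forest_def)
  qed (auto simp: Some admissible_def forest_def)
qed

lemma forest_Suc:
  "forest (Suc k) w \<longleftrightarrow> (\<exists>u v. w = u @ v \<and> forest 1 u \<and> forest k v)"
proof
  assume f: "forest (Suc k) w"
  have "first_passage (int k + 1) (map step w)"
    using f unfolding forest_def by (simp add: add.commute)
  moreover have "\<forall>x\<in>set (map step w). x \<ge> -1" by (auto simp: step_def split: option.split)
  ultimately have "\<exists>u v. map step w = u @ v \<and> first_passage 1 u \<and> first_passage (int k) v"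
    by (intro first_passage_split) simp_all
  then obtain u v where uv: "map step w = u @ v" "first_passage 1 u" "first_passage (int k) v"
    by blast
  obtain u' v' where w: "w = u' @ v'" "map step u' = u" "map step v' = v"
    using uv(1) unfolding map_eq_append_conv by blast
  then show "\<exists>u v. w = u @ v \<and> forest 1 u \<and> forest k v"
    using f uv(2,3) by (auto simp: forest_def)
next
  assume "\<exists>u v. w = u @ v \<and> forest 1 u \<and> forest k v"
  then obtain u v where uv: "w = u @ v" "forest 1 u" "forest k v" by blast
  have "first_passage (int k + 1) (map step u @ map step v)"
    by (rule first_passage_append) (use uv in \<open>auto simp: forest_def\<close>)
  then show "forest (Suc k) w" using uv by (auto simp: forest_def add.commute)
qed

lemma forest_1_prefix_unique:
  assumes "forest 1 u" "forest 1 u'" "u @ v = u' @ v'"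
  shows "u = u'"
proof -
  have "map step u @ map step v = map step u' @ map step v'" using assms(3) by (metis map_append)
  then have "map step u = map step u'"
    using first_passage_prefix_unique assms(1,2) unfolding forest_def of_nat_1 by blast
  then have "length u = length u'" by (metis length_map)
  then show ?thesis using assms(3) by (simp add: append_eq_append_conv)
qed


section \<open>The generating function of forests\<close>

definition letter_weight :: "(nat \<times> nat \<Rightarrow> real) \<Rightarrow> letter \<Rightarrow> real" where
  "letter_weight c x = (case x of None \<Rightarrow> 1 | Some p \<Rightarrow> c p)"

definition weight :: "(nat \<times> nat \<Rightarrow> real) \<Rightarrow> letter list \<Rightarrow> real" where
  "weight c w = prod_list (map (letter_weight c) w)"

definition total_size :: "letter list \<Rightarrow> nat" where
  "total_size w = sum_list (map letter_size w)"

definition forests :: "nat \<Rightarrow> nat \<Rightarrow> letter list set" where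
  "forests k n = {w. forest k w \<and> total_size w = n}"

definition forest_sum :: "(nat \<times> nat \<Rightarrow> real) \<Rightarrow> nat \<Rightarrow> nat \<Rightarrow> real" where
  "forest_sum c k n = (\<Sum>w\<in>forests k n. weight c w)"

definition forest_gf :: "(nat \<times> nat \<Rightarrow> real) \<Rightarrow> nat \<Rightarrow> real fps" where
  "forest_gf c k = Abs_fps (forest_sum c k)"

lemma total_size_append: "total_size (u @ v) = total_size u + total_size v"
  by (simp add: total_size_def)

lemma weight_append: "weight c (u @ v) = weight c u * weight c v"
  by (simp add: weight_def)

text \<open>Every admissible letter has 3 size - step \<ge> 1, which bounds the length of a word.\<close>
lemma length_le_total_size:
  assumes "\<forall>x\<in>set w. admissible x"
  shows "int (length w) \<le> 3 * int (total_size w) - sum_list (map step w)"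
  using assms
proof (induction w)
  case Nil then show ?case by (simp add: total_size_def)
next
  case (Cons x w)
  have "1 \<le> 3 * int (letter_size x) - step x"
    using Cons.prems by (cases x) (auto simp: letter_size_def step_def admissible_def idx_I_def)
  then show ?case using Cons by (simp add: total_size_def)
qed

lemma finite_forests: "finite (forests k n)"
proof -
  define A where "A = insert None (Some ` idx_upto n)"
  have "finite A" using finite_idx_upto unfolding A_def by simp
  have "forests k n \<subseteq> {xs. set xs \<subseteq> A \<and> length xs \<le> k + 3 * n}"
  proof safe
    fix w assume w: "w \<in> forests k n"
    then have ok: "\<forall>x\<in>set w. admissible x" and s: "sum_list (map step w) = - int k"
      and b: "total_size w = n"
      by (auto simp: forests_def forest_def first_passage_def)
    show "length w \<le> k + 3 * n" using length_le_total_size[OF ok] s b by simp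
    fix x assume x: "x \<in> set w"
    have "letter_size x \<le> total_size w" unfolding total_size_def
      using x by (intro member_le_sum_list) auto
    then show "x \<in> A" using b ok x
      by (cases x) (auto simp: A_def idx_upto_def letter_size_def admissible_def)
  qed
  then show ?thesis using finite_lists_length_le[OF \<open>finite A\<close>] finite_subset by blast
qed

lemma forest_gf_0: "forest_gf c 0 = 1"
proof -
  have "forests 0 n = (if n = 0 then {[]} else {})" for n
    by (auto simp: forests_def forest_0 total_size_def)
  then show ?thesis by (intro fps_ext) (simp add: forest_gf_def forest_sum_def weight_def)
qed

lemma bij_forests_Suc:
  "bij_betw (\<lambda>(i, u, v). u @ v) (SIGMA i:{..n}. forests 1 i \<times> forests k (n - i)) (forests (Suc k) n)"
  (is "bij_betw ?h ?Q _")
  unfolding bij_betw_def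
proof
  show "inj_on ?h ?Q"
  proof (rule inj_onI)
    fix x y assume x: "x \<in> ?Q" and y: "y \<in> ?Q" and e: "?h x = ?h y"
    obtain i u v where x': "x = (i, u, v)" by (cases x) auto
    obtain i' u' v' where y': "y = (i', u', v')" by (cases y) auto
    have "forest 1 u" "forest 1 u'" using x y x' y' by (auto simp: forests_def)
    moreover have uv: "u @ v = u' @ v'" using e x' y' by simp
    ultimately have "u = u'" by (rule forest_1_prefix_unique)
    moreover have "i = total_size u" "i' = total_size u'" using x y x' y' by (auto simp: forests_def)
    ultimately show "x = y" using x' y' uv by simp
  qed
  show "?h ` ?Q = forests (Suc k) n"
  proof
    show "?h ` ?Q \<subseteq> forests (Suc k) n"
    proof
      fix w assume "w \<in> ?h ` ?Q"
      then obtain i u v where "i \<le> n" "u \<in> forests 1 i" "v \<in> forests k (n - i)" "w = u @ v"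
        by auto
      then show "w \<in> forests (Suc k) n"
        unfolding forests_def forest_Suc by (auto simp: total_size_append)
    qed
    show "forests (Suc k) n \<subseteq> ?h ` ?Q"
    proof
      fix w assume "w \<in> forests (Suc k) n"
      then obtain u v where uv: "w = u @ v" "forest 1 u" "forest k v"
        "total_size u + total_size v = n"
        unfolding forests_def forest_Suc by (auto simp: total_size_append)
      then have "(total_size u, u, v) \<in> ?Q" by (auto simp: forests_def)
      moreover have "w = ?h (total_size u, u, v)" using uv(1) by simp
      ultimately show "w \<in> ?h ` ?Q" by (rule rev_image_eqI)
    qed
  qed
qed

lemma forest_gf_Suc: "forest_gf c (Suc k) = forest_gf c 1 * forest_gf c k"
proof (rule fps_ext)
  fix n
  let ?Q = "SIGMA i:{..n}. forests 1 i \<times> forests k (n - i)"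
  have "forest_sum c (Suc k) n = (\<Sum>x\<in>?Q. weight c ((\<lambda>(i, u, v). u @ v) x))"
    unfolding forest_sum_def by (rule sum.reindex_bij_betw[OF bij_forests_Suc, symmetric])
  also have "\<dots> = (\<Sum>i\<le>n. \<Sum>y\<in>forests 1 i \<times> forests k (n - i). weight c (fst y) * weight c (snd y))"
    by (subst sum.Sigma) (simp_all add: finite_forests weight_append split_def)
  also have "\<dots> = (\<Sum>i\<le>n. forest_sum c 1 i * forest_sum c k (n - i))"
    by (simp add: forest_sum_def sum_product sum.cartesian_product split_def)
  finally show "forest_gf c (Suc k) $ n = (forest_gf c 1 * forest_gf c k) $ n"
    by (simp add: forest_gf_def fps_mult_nth atLeast0AtMost)
qed

lemma forest_gf_power: "forest_gf c k = forest_gf c 1 ^ k"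
  by (induction k) (simp_all only: forest_gf_0 forest_gf_Suc power_0 power_Suc)

lemma bij_trees:
  "bij_betw (\<lambda>(p, v). Some p # v) (SIGMA p:idx_upto n. forests (fst p) (n - snd p))
     (forests 1 n - {[None]})"
proof (rule bij_betwI')
  fix x assume "x \<in> (SIGMA p:idx_upto n. forests (fst p) (n - snd p))"
  then obtain p v where x: "x = (p, v)" "p \<in> idx_I" "snd p \<le> n" "forest (fst p) v"
    "total_size v = n - snd p" by (auto simp: idx_upto_def forests_def)
  then have "forest 1 (Some p # v)" by (intro forest_Cons_1[THEN iffD2]) simp
  then show "(\<lambda>(p, v). Some p # v) x \<in> forests 1 n - {[None]}"
    using x by (simp add: forests_def total_size_def letter_size_def)
next
  fix w assume "w \<in> forests 1 n - {[None]}"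
  then have f: "forest 1 w" and s: "total_size w = n" and w1: "w \<noteq> [None]"
    by (auto simp: forests_def)
  obtain x v where xv: "w = x # v"
    using f by (cases w) (auto simp: forest_def first_passage_def)
  then obtain p where p: "x = Some p" "p \<in> idx_I" "forest (fst p) v"
    using f w1 forest_Cons_1 by blast
  then have "total_size w = snd p + total_size v"
    using xv by (simp add: total_size_def letter_size_def)
  then show "\<exists>y\<in>(SIGMA p:idx_upto n. forests (fst p) (n - snd p)). w = (\<lambda>(p, v). Some p # v) y"
    using s p xv by (intro bexI[of _ "(p, v)"]) (auto simp: forests_def idx_upto_def)
qed auto

lemma forest_sum_1:
  "forest_sum c 1 n = (if n = 0 then 1 else 0) +
     (\<Sum>p\<in>idx_upto n. c p * forest_sum c (fst p) (n - snd p))"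
proof -
  let ?B = "SIGMA p:idx_upto n. forests (fst p) (n - snd p)"
  have "forest 1 [None]" using forest_Cons_1[of None "[]"] by simp
  then have "forests 1 n \<inter> {[None]} = (if n = 0 then {[None]} else {})"
    by (auto simp: forests_def total_size_def letter_size_def)
  then have leaf: "(\<Sum>w\<in>forests 1 n \<inter> {[None]}. weight c w) = (if n = 0 then 1 else 0)"
    by (simp add: weight_def letter_weight_def)
  have "(\<Sum>w\<in>forests 1 n - {[None]}. weight c w) = (\<Sum>x\<in>?B. weight c ((\<lambda>(p, v). Some p # v) x))"
    by (rule sum.reindex_bij_betw[OF bij_trees, symmetric])
  also have "\<dots> = (\<Sum>p\<in>idx_upto n. \<Sum>v\<in>forests (fst p) (n - snd p). c p * weight c v)"
    by (subst sum.Sigma) (simp_all add: finite_idx_upto finite_forests weight_def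
        letter_weight_def split_def)
  also have "\<dots> = (\<Sum>p\<in>idx_upto n. c p * forest_sum c (fst p) (n - snd p))"
    by (simp add: forest_sum_def sum_distrib_left)
  finally show ?thesis
    unfolding forest_sum_def sum.Int_Diff[OF finite_forests, of "weight c" 1 n "{[None]}"] leaf
    by simp
qed

lemma coeff_rec_forest_gf: "coeff_rec c (fps_X * forest_gf c 1)"
  unfolding coeff_rec_def
proof (intro conjI allI)
  show "(fps_X * forest_gf c 1) $ 0 = 0" by simp
  fix n
  have "((fps_X * forest_gf c 1) ^ fst p) $ (n + fst p - snd p) = forest_sum c (fst p) (n - snd p)"
    if "p \<in> idx_upto n" for p
  proof -
    have "(fps_X * forest_gf c 1) ^ fst p = fps_X ^ fst p * forest_gf c (fst p)"
      by (simp only: power_mult_distrib forest_gf_power[symmetric])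
    moreover have "snd p \<le> n" using that by (simp add: idx_upto_def)
    ultimately show ?thesis by (simp add: fps_X_power_mult_nth forest_gf_def)
  qed
  then have "(\<Sum>p\<in>idx_upto n. c p * ((fps_X * forest_gf c 1) ^ fst p) $ (n + fst p - snd p)) =
      (\<Sum>p\<in>idx_upto n. c p * forest_sum c (fst p) (n - snd p))"
    by simp
  moreover have "(fps_X * forest_gf c 1) $ Suc n = forest_sum c 1 n"
    by (simp add: forest_gf_def)
  ultimately show "(fps_X * forest_gf c 1) $ Suc n = (if n = 0 then 1 else 0) +
     (\<Sum>p\<in>idx_upto n. c p * ((fps_X * forest_gf c 1) ^ fst p) $ (n + fst p - snd p))"
    by (simp only: forest_sum_1)
qed


section \<open>The cycle lemma\<close>

lemma mset_rotate: "mset (rotate n xs) = mset xs"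
  by (metis append_take_drop_id mset_append rotate_drop_take union_commute)

lemma sum_take_rotate:
  fixes xs :: "'a::ab_group_add list"
  assumes i: "i < length xs" and j: "j \<le> length xs"
  shows "sum_list (take j (rotate i xs)) =
    (if i + j < length xs then sum_list (take (i + j) xs) - sum_list (take i xs)
     else sum_list xs - sum_list (take i xs) + sum_list (take (i + j - length xs) xs))"
proof -
  have r: "rotate i xs = drop i xs @ take i xs" using i by (simp add: rotate_drop_take)
  have drop: "sum_list (take j (drop i xs)) = sum_list (take (i + j) xs) - sum_list (take i xs)" for j
    by (simp add: take_add)
  show ?thesis
  proof (cases "i + j \<le> length xs")
    case True
    then show ?thesis using r drop by (auto simp: take_all)
  next
    case False
    have "sum_list (drop i xs) = sum_list xs - sum_list (take i xs)"
      by (metis append_take_drop_id add_diff_cancel_left' sum_list_append)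
    moreover have "j - (length xs - i) = i + j - length xs" "i + j - length xs \<le> i"
      using False i j by auto
    ultimately show ?thesis using r False j by (simp add: min_def)
  qed
qed

lemma first_passage_rotate_iff:
  fixes xs :: "int list"
  defines "p \<equiv> \<lambda>k. sum_list (take k xs)"
  assumes i: "i < length xs" and s: "sum_list xs = -1"
  shows "first_passage 1 (rotate i xs) \<longleftrightarrow> (\<forall>k<length xs. p i \<le> p k) \<and> (\<forall>k<i. p i < p k)"
proof -
  let ?L = "length xs"
  have rot: "sum_list (take j (rotate i xs)) =
      (if i + j < ?L then p (i + j) - p i else p (i + j - ?L) - 1 - p i)" if "j < ?L" for j
    using sum_take_rotate[OF i, of j] that s by (simp add: p_def)
  have "sum_list (rotate i xs) = -1" using s by (metis mset_rotate sum_mset_sum_list)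
  then have "first_passage 1 (rotate i xs) \<longleftrightarrow> (\<forall>j<?L. sum_list (take j (rotate i xs)) \<ge> 0)"
    by (auto simp: first_passage_def)
  also have "\<dots> \<longleftrightarrow> (\<forall>k<?L. if i \<le> k then p i \<le> p k else p i < p k)"
  proof
    assume h: "\<forall>j<?L. sum_list (take j (rotate i xs)) \<ge> 0"
    show "\<forall>k<?L. if i \<le> k then p i \<le> p k else p i < p k"
    proof (intro allI impI)
      fix k assume k: "k < ?L"
      show "if i \<le> k then p i \<le> p k else p i < p k"
      proof (cases "i \<le> k")
        case True then show ?thesis using h[rule_format, of "k - i"] rot[of "k - i"] k by simp
      next
        case False
        then show ?thesis using h[rule_format, of "?L - i + k"] rot[of "?L - i + k"] k i by simp
      qed
    qed
  next
    assume h: "\<forall>k<?L. if i \<le> k then p i \<le> p k else p i < p k"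
    show "\<forall>j<?L. sum_list (take j (rotate i xs)) \<ge> 0"
    proof (intro allI impI)
      fix j assume j: "j < ?L"
      show "sum_list (take j (rotate i xs)) \<ge> 0"
      proof (cases "i + j < ?L")
        case True then show ?thesis using h rot[OF j] by fastforce
      next
        case False then show ?thesis using h[rule_format, of "i + j - ?L"] rot[OF j] i j by simp
      qed
    qed
  qed
  also have "\<dots> \<longleftrightarrow> (\<forall>k<?L. p i \<le> p k) \<and> (\<forall>k<i. p i < p k)"
    using i by (metis less_imp_le not_le order_less_trans)
  finally show ?thesis .
qed

lemma unique_leftmost_minimiser:
  fixes f :: "nat \<Rightarrow> 'a::linorder"
  assumes "L > 0"
  shows "card {i. i < L \<and> (\<forall>k<L. f i \<le> f k) \<and> (\<forall>k<i. f i < f k)} = 1"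
proof -
  let ?min = "\<lambda>i. i < L \<and> (\<forall>k<L. f i \<le> f k)"
  have "Min (f ` {..<L}) \<in> f ` {..<L}" using assms by (intro Min_in) auto
  then obtain i1 where "i1 < L" "f i1 = Min (f ` {..<L})" by auto
  then have "?min i1" by (auto intro: Min_le)
  define i0 where "i0 = (LEAST i. ?min i)"
  have i0: "?min i0" unfolding i0_def by (rule LeastI) fact
  have "f i0 < f k" if "k < i0" for k
    using i0 not_less_Least[OF that[unfolded i0_def]] that unfolding i0_def
    by (metis (lifting) order.strict_trans le_less)
  then have in_set: "i0 \<in> {i. i < L \<and> (\<forall>k<L. f i \<le> f k) \<and> (\<forall>k<i. f i < f k)}"
    using i0 by blast
  have "i = i'" if "i \<in> {i. i < L \<and> (\<forall>k<L. f i \<le> f k) \<and> (\<forall>k<i. f i < f k)}"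
    and "i' \<in> {i. i < L \<and> (\<forall>k<L. f i \<le> f k) \<and> (\<forall>k<i. f i < f k)}" for i i'
    using that by (metis (lifting) mem_Collect_eq linorder_neqE_nat not_le)
  then have "{i. i < L \<and> (\<forall>k<L. f i \<le> f k) \<and> (\<forall>k<i. f i < f k)} = {i0}"
    using in_set by blast
  then show ?thesis by simp
qed

lemma cycle_lemma:
  fixes xs :: "int list"
  assumes s: "sum_list xs = -1"
  shows "card {i. i < length xs \<and> first_passage 1 (rotate i xs)} = 1"
proof -
  have "length xs > 0" using s by (cases xs) auto
  then show ?thesis
    using unique_leftmost_minimiser[of "length xs" "\<lambda>k. sum_list (take k xs)"]
      first_passage_rotate_iff[OF _ s] by (simp cong: conj_cong)
qed


section \<open>Counting trees with a prescribed multiset of letters\<close>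

text \<open>Rotation by i < size M permutes the arrangements of M.\<close>
lemma card_rotate_permutations:
  assumes "i < size M"
  shows "card {w \<in> permutations_of_multiset M. Q (rotate i w)} =
         card {w \<in> permutations_of_multiset M. Q w}"
proof -
  let ?P = "permutations_of_multiset M"
  have len: "length w = size M" if "w \<in> ?P" for w
    using that by (auto simp: length_finite_permutations_of_multiset)
  have inv: "rotate i (rotate (size M - i) w) = w" "rotate (size M - i) (rotate i w) = w"
    if "w \<in> ?P" for w
    using len[OF that] assms by (simp_all add: rotate_rotate rotate_id)
  have "bij_betw (rotate i) {w \<in> ?P. Q (rotate i w)} {w \<in> ?P. Q w}"
    by (rule bij_betwI[where g = "rotate (size M - i)"])
       (auto simp: inv permutations_of_multiset_def mset_rotate)
  then show ?thesis by (rule bij_betw_same_card)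
qed

text \<open>Double counting of pairs (word, rotation): if every arrangement of M has exactly
  one rotation with property Q, then a fraction 1/size M of the arrangements has Q.\<close>
lemma card_permutations_unique_rotation:
  assumes one: "\<And>w. w \<in> permutations_of_multiset M \<Longrightarrow> card {i. i < size M \<and> Q (rotate i w)} = 1"
  shows "card {w \<in> permutations_of_multiset M. Q w} * size M = card (permutations_of_multiset M)"
proof -
  let ?P = "permutations_of_multiset M"
  have count: "card {x \<in> A. R x} = (\<Sum>x\<in>A. if R x then 1 else 0)" if "finite A" for A R
    using that by (simp add: sum.inter_filter[symmetric])
  have count_below: "card {i. i < n \<and> R i} = (\<Sum>i<n. if R i then 1 else 0)" for n :: nat and R
    using count[of "{..<n}" R] by simp
  have "card ?P = (\<Sum>w\<in>?P. card {i. i < size M \<and> Q (rotate i w)})"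
    using one by simp
  also have "\<dots> = (\<Sum>i<size M. \<Sum>w\<in>?P. if Q (rotate i w) then 1 else 0)"
    by (simp add: count_below sum.swap[of _ ?P])
  also have "\<dots> = (\<Sum>i<size M. card {w \<in> ?P. Q w})"
    by (rule sum.cong) (simp_all add: count[symmetric] card_rotate_permutations)
  finally show ?thesis by simp
qed

lemma card_tree_permutations:
  assumes ok: "\<forall>x\<in>#M. admissible x" and s: "sum_mset (image_mset step M) = -1"
  shows "card {w \<in> permutations_of_multiset M. forest 1 w} * size M =
         card (permutations_of_multiset M)"
proof (rule card_permutations_unique_rotation)
  fix w assume w: "w \<in> permutations_of_multiset M"
  then have mw: "mset w = M" "length w = size M"
    by (auto simp: permutations_of_multiset_def length_finite_permutations_of_multiset)
  have "sum_list (map step w) = -1" using s mw by (metis mset_map sum_mset_sum_list)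
  then have "card {i. i < length (map step w) \<and> first_passage 1 (rotate i (map step w))} = 1"
    by (rule cycle_lemma)
  moreover have "forest 1 (rotate i w) \<longleftrightarrow> first_passage 1 (rotate i (map step w))" for i
    using ok by (simp add: forest_def rotate_map mw(1)[symmetric])
  ultimately show "card {i. i < size M \<and> forest 1 (rotate i w)} = 1" using mw by simp
qed


lemma sum_list_map_count:
  fixes f :: "'b \<Rightarrow> 'a::comm_semiring_1"
  assumes "finite X" "set w \<subseteq> X"
  shows "sum_list (map f w) = (\<Sum>x\<in>X. of_nat (count_list w x) * f x)"
  using assms(2)
proof (induction w)
  case (Cons y w)
  have "(\<Sum>x\<in>X. of_nat (count_list (y # w) x) * f x) =
      (\<Sum>x\<in>X. of_nat (count_list w x) * f x + (if x = y then f y else 0))"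
    by (rule sum.cong) (auto simp: algebra_simps)
  then show ?case using Cons assms(1) by (simp add: sum.distrib add.commute)
qed simp

lemma prod_list_map_count:
  fixes f :: "'b \<Rightarrow> 'a::comm_monoid_mult"
  assumes "finite X" "set w \<subseteq> X"
  shows "prod_list (map f w) = (\<Prod>x\<in>X. f x ^ count_list w x)"
  using assms(2)
proof (induction w)
  case (Cons y w)
  have "(\<Prod>x\<in>X. f x ^ count_list (y # w) x) =
      (\<Prod>x\<in>X. f x ^ count_list w x * (if x = y then f y else 1))"
    by (rule prod.cong) (auto simp: algebra_simps)
  then show ?case using Cons assms(1) by (simp add: prod.distrib mult.commute)
qed simp

definition node_counts :: "letter list \<Rightarrow> nat \<times> nat \<Rightarrow> nat" where
  "node_counts w = (\<lambda>p. count_list w (Some p))"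

lemma supp_node_counts: "supp_fam (node_counts w) = Some -` set w"
  by (auto simp: supp_fam_def node_counts_def count_list_0_iff)

lemma finite_supp_node_counts: "finite (supp_fam (node_counts w))"
  by (simp add: supp_node_counts finite_vimageI)

lemma word_statistics:
  fixes f :: "letter \<Rightarrow> 'a::comm_semiring_1" and g :: "letter \<Rightarrow> 'b::comm_monoid_mult"
  assumes m: "node_counts w = m"
  shows "sum_list (map f w) = of_nat (count_list w None) * f None +
           (\<Sum>p\<in>supp_fam m. of_nat (m p) * f (Some p))"
    and "prod_list (map g w) = g None ^ count_list w None * (\<Prod>p\<in>supp_fam m. g (Some p) ^ m p)"
proof -
  let ?X = "insert None (Some ` supp_fam m)"
  have fin: "finite (supp_fam m)" using finite_supp_node_counts m by blast
  have sub: "set w \<subseteq> ?X"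
  proof
    fix x assume x: "x \<in> set w"
    show "x \<in> ?X" by (cases x) (use x m in \<open>auto simp: supp_node_counts\<close>)
  qed
  have cw: "count_list w (Some p) = m p" for p using m by (auto simp: node_counts_def)
  show "sum_list (map f w) = of_nat (count_list w None) * f None +
           (\<Sum>p\<in>supp_fam m. of_nat (m p) * f (Some p))"
    using sum_list_map_count[OF _ sub, of f] fin by (simp add: sum.reindex cw)
  show "prod_list (map g w) = g None ^ count_list w None * (\<Prod>p\<in>supp_fam m. g (Some p) ^ m p)"
    using prod_list_map_count[OF _ sub, of g] fin by (simp add: prod.reindex cw)
qed

definition child_count :: "(nat \<times> nat \<Rightarrow> nat) \<Rightarrow> nat" where
  "child_count m = (\<Sum>(a, b)\<in>supp_fam m. a * m (a, b))"

definition leaf_count :: "(nat \<times> nat \<Rightarrow> nat) \<Rightarrow> nat" where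
  "leaf_count m = 1 + (\<Sum>(a, b)\<in>supp_fam m. (a - 1) * m (a, b))"

definition letter_mset :: "(nat \<times> nat \<Rightarrow> nat) \<Rightarrow> letter multiset" where
  "letter_mset m = replicate_mset (leaf_count m) None +
     (\<Sum>p\<in>supp_fam m. replicate_mset (m p) (Some p))"

lemma count_letter_mset_None: "count (letter_mset m) None = leaf_count m"
  by (simp add: letter_mset_def count_sum)

lemma count_letter_mset_Some:
  assumes "finite (supp_fam m)"
  shows "count (letter_mset m) (Some p) = m p"
  using assms by (simp add: letter_mset_def count_sum sum.delta' supp_fam_def)

lemma set_letter_mset:
  assumes "finite (supp_fam m)"
  shows "set_mset (letter_mset m) = insert None (Some ` supp_fam m)"
proof -
  have "x \<in># letter_mset m \<longleftrightarrow> x \<in> insert None (Some ` supp_fam m)" for x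
    using count_letter_mset_Some[OF assms] count_letter_mset_None[of m]
    by (cases x) (auto simp: leaf_count_def supp_fam_def simp flip: count_greater_zero_iff)
  then show ?thesis by blast
qed

lemma mset_eq_letter_mset:
  assumes "finite (supp_fam m)"
  shows "mset w = letter_mset m \<longleftrightarrow> count_list w None = leaf_count m \<and> node_counts w = m"
proof
  assume h: "mset w = letter_mset m"
  show "count_list w None = leaf_count m \<and> node_counts w = m"
    using arg_cong[OF h, of "\<lambda>M. count M _"] count_letter_mset_Some[OF assms]
      count_letter_mset_None by (auto simp: node_counts_def count_mset)
next
  assume h: "count_list w None = leaf_count m \<and> node_counts w = m"
  show "mset w = letter_mset m"
  proof (rule multiset_eqI)
    fix x show "count (mset w) x = count (letter_mset m) x"
      by (cases x) (use h count_letter_mset_Some[OF assms] count_letter_mset_None in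
          \<open>auto simp: count_mset node_counts_def\<close>)
  qed
qed

text \<open>For node counts from I, the leaf count is exactly what makes the total step -1.\<close>
lemma leaf_count_int:
  assumes "supp_fam m \<subseteq> idx_I"
  shows "int (leaf_count m) = 1 + (\<Sum>p\<in>supp_fam m. int (m p) * (int (fst p) - 1))"
proof -
  have "int ((a - 1) * m (a, b)) = int (m (a, b)) * (int a - 1)" if "(a, b) \<in> supp_fam m" for a b
    using that assms by (auto simp: idx_I_def of_nat_diff)
  then show ?thesis by (auto simp: leaf_count_def case_prod_beta intro!: sum.cong)
qed

text \<open>A tree has one letter more than it has children, namely its root.\<close>
lemma size_letter_mset:
  assumes "finite (supp_fam m)" "supp_fam m \<subseteq> idx_I"
  shows "size (letter_mset m) = child_count m + 1"
proof -
  have "(a - 1) * m (a, b) + m (a, b) = a * m (a, b)" if "(a, b) \<in> supp_fam m" for a b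
    using that assms(2) by (auto simp: idx_I_def algebra_simps)
  then have "(\<Sum>(a, b)\<in>supp_fam m. (a - 1) * m (a, b)) + (\<Sum>p\<in>supp_fam m. m p) = child_count m"
    unfolding child_count_def sum.distrib[symmetric] by (auto intro!: sum.cong)
  then show ?thesis by (simp add: letter_mset_def leaf_count_def)
qed

lemma sum_step_letter_mset:
  assumes "finite (supp_fam m)" "supp_fam m \<subseteq> idx_I"
  shows "sum_mset (image_mset step (letter_mset m)) = -1"
proof -
  obtain w where w: "mset w = letter_mset m" using ex_mset by blast
  then have "count_list w None = leaf_count m" "node_counts w = m"
    using mset_eq_letter_mset[OF assms(1)] by auto
  then have "sum_list (map step w) = -1"
    using word_statistics(1)[of w m step] leaf_count_int[OF assms(2)] by (simp add: step_def)
  then show ?thesis using w by (metis mset_map sum_mset_sum_list)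
qed

lemma admissible_letter_mset:
  assumes "finite (supp_fam m)" "supp_fam m \<subseteq> idx_I"
  shows "\<forall>x\<in>#letter_mset m. admissible x"
  using assms by (auto simp: set_letter_mset admissible_def)

lemma prod_fact_letter_mset:
  assumes "finite (supp_fam m)"
  shows "(\<Prod>x\<in>set_mset (letter_mset m). fact (count (letter_mset m) x)) =
      fact (leaf_count m) * (\<Prod>p\<in>supp_fam m. fact (m p) :: nat)"
  using assms by (simp add: set_letter_mset prod.reindex count_letter_mset_Some count_letter_mset_None)

lemma trees_with_node_counts:
  assumes m: "m \<in> S_set (Suc k)"
  shows "{w \<in> forests 1 k. node_counts w = m} =
         {w \<in> permutations_of_multiset (letter_mset m). forest 1 w}"
proof -
  have fin: "finite (supp_fam m)" and sub: "supp_fam m \<subseteq> idx_I"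
    and k: "k = (\<Sum>p\<in>supp_fam m. of_nat (m p) * snd p)"
    using m by (auto simp: S_set_def case_prod_beta mult.commute)
  have "count_list w None = leaf_count m \<longleftrightarrow> total_size w = k"
    if "forest 1 w" "node_counts w = m" for w
  proof -
    have "sum_list (map step w) = -1" using that(1) by (simp add: forest_def first_passage_def)
    then have "count_list w None = leaf_count m"
      using word_statistics(1)[OF that(2), of step] leaf_count_int[OF sub] by (simp add: step_def)
    moreover have "total_size w = k"
      using word_statistics(1)[OF that(2), of letter_size] k by (simp add: total_size_def letter_size_def)
    ultimately show ?thesis by simp
  qed
  then show ?thesis
    by (auto simp: forests_def permutations_of_multiset_def mset_eq_letter_mset[OF fin])
qed

lemma card_trees_with_node_counts_nat:
  assumes m: "m \<in> S_set (Suc k)"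
  shows "card {w \<in> forests 1 k. node_counts w = m} * (fact (leaf_count m) * (\<Prod>p\<in>supp_fam m. fact (m p)))
         = (fact (child_count m) :: nat)"
proof -
  have fin: "finite (supp_fam m)" and sub: "supp_fam m \<subseteq> idx_I" using m by (auto simp: S_set_def)
  define N where "N = card {w \<in> forests 1 k. node_counts w = m}"
  define F where "F = (fact (leaf_count m) * (\<Prod>p\<in>supp_fam m. fact (m p)) :: nat)"
  have "N * (child_count m + 1) = card (permutations_of_multiset (letter_mset m))"
    using card_tree_permutations[OF admissible_letter_mset[OF fin sub] sum_step_letter_mset[OF fin sub]]
    unfolding N_def trees_with_node_counts[OF m] size_letter_mset[OF fin sub] .
  moreover have "card (permutations_of_multiset (letter_mset m)) * F = fact (child_count m + 1)"
    using card_permutations_of_multiset_aux[of "letter_mset m"]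
    unfolding F_def prod_fact_letter_mset[OF fin] size_letter_mset[OF fin sub] .
  ultimately have "(child_count m + 1) * (N * F) = fact (child_count m + 1)"
    by (metis mult.assoc mult.commute)
  also have "\<dots> = (child_count m + 1) * fact (child_count m)"
    by (simp only: Suc_eq_plus1[symmetric] fact_Suc) simp
  finally have "(child_count m + 1) * (N * F) = (child_count m + 1) * fact (child_count m)" .
  then have "N * F = fact (child_count m)" by (rule mult_left_cancel[THEN iffD1, rotated]) simp
  then show ?thesis unfolding N_def F_def .
qed

lemma card_trees_with_node_counts:
  assumes "m \<in> S_set (Suc k)"
  shows "real (card {w \<in> forests 1 k. node_counts w = m}) =
     fact (child_count m) / ((\<Prod>(a, b)\<in>supp_fam m. fact (m (a, b))) * fact (leaf_count m))"
proof -
  have "(\<Prod>p\<in>supp_fam m. fact (m p) :: real) > 0" by (simp add: prod_pos)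
  then have "(\<Prod>(a, b)\<in>supp_fam m. fact (m (a, b)) :: real) * fact (leaf_count m) \<noteq> 0"
    by (simp add: case_prod_beta)
  moreover have "real (card {w \<in> forests 1 k. node_counts w = m}) *
      ((\<Prod>(a, b)\<in>supp_fam m. fact (m (a, b))) * fact (leaf_count m)) = fact (child_count m)"
    using arg_cong[OF card_trees_with_node_counts_nat[OF assms], of real]
    by (simp add: of_nat_prod case_prod_beta mult_ac)
  ultimately show ?thesis by (simp add: eq_divide_eq)
qed

lemma node_counts_tree:
  assumes "w \<in> forests 1 k"
  shows "node_counts w \<in> S_set (Suc k)"
proof -
  have f: "forest 1 w" and k: "total_size w = k" using assms by (auto simp: forests_def)
  have "supp_fam (node_counts w) \<subseteq> idx_I"
    using f by (auto simp: supp_node_counts forest_def admissible_def)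
  moreover have "k = (\<Sum>(a, b)\<in>supp_fam (node_counts w). b * node_counts w (a, b))"
    using word_statistics(1)[of w _ letter_size, OF refl] k
    by (simp add: total_size_def letter_size_def case_prod_beta mult.commute)
  ultimately show ?thesis using finite_supp_node_counts by (simp add: S_set_def)
qed

lemma node_counts_trees_image: "node_counts ` forests 1 k = S_set (Suc k)"
proof
  show "node_counts ` forests 1 k \<subseteq> S_set (Suc k)" using node_counts_tree by blast
  show "S_set (Suc k) \<subseteq> node_counts ` forests 1 k"
  proof
    fix m assume m: "m \<in> S_set (Suc k)"
    then have "card {w \<in> forests 1 k. node_counts w = m} \<noteq> 0"
      using card_trees_with_node_counts_nat[OF m] by (metis fact_nonzero mult_is_0)
    then have "{w \<in> forests 1 k. node_counts w = m} \<noteq> {}" by (metis card.empty)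
    then show "m \<in> node_counts ` forests 1 k" by blast
  qed
qed


text \<open>beta is s times the tree series, so its coefficients are weighted tree counts.\<close>
lemma beta_coeff_tree_sum:
  assumes "\<beta> $ 0 = 0" "\<exists>T. (eq_term c \<beta> has_sum T) idx_I \<and> \<beta> = fps_X * (1 + T)"
  shows "\<beta> $ Suc k = (\<Sum>w\<in>forests 1 k. weight c w)"
proof -
  have "\<beta> = fps_X * forest_gf c 1"
    using assms coeff_rec_beta coeff_rec_unique coeff_rec_forest_gf by metis
  then show ?thesis by (simp add: forest_gf_def forest_sum_def)
qed

text \<open>All trees with node counts m have weight prod c_{a,b}^{n_{a,b}}, so their total weight
  is this product times their number.\<close>
lemma weight_tree_sum_fibre:
  assumes "m \<in> S_set (Suc k)"
  shows "(\<Sum>w\<in>{w \<in> forests 1 k. node_counts w = m}. weight c w) =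
    fact (child_count m) / ((\<Prod>(a, b)\<in>supp_fam m. fact (m (a, b))) * fact (leaf_count m)) *
    (\<Prod>(a, b)\<in>supp_fam m. c (a, b) ^ m (a, b))"
proof -
  have "weight c w = (\<Prod>(a, b)\<in>supp_fam m. c (a, b) ^ m (a, b))" if "node_counts w = m" for w
    using word_statistics(2)[OF that, of "letter_weight c"]
    by (simp add: weight_def letter_weight_def case_prod_beta)
  then show ?thesis using card_trees_with_node_counts[OF assms] by simp
qed

theorem lemma2:
  fixes c :: "nat \<times> nat \<Rightarrow> real" and \<beta> :: "real fps"
  assumes const0: "fps_nth \<beta> 0 = 0"
    and eqn: "\<exists>T. (eq_term c \<beta> has_sum T) idx_I \<and> \<beta> = fps_X * (1 + T)"
  shows "\<forall>n\<ge>1. fps_nth \<beta> n =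
    (\<Sum>m\<in>S_set n.
       (fact (\<Sum>(a, b)\<in>supp_fam m. a * m (a, b)) /
        ((\<Prod>(a, b)\<in>supp_fam m. fact (m (a, b))) *
         fact (1 + (\<Sum>(a, b)\<in>supp_fam m. (a - 1) * m (a, b))))) *
       (\<Prod>(a, b)\<in>supp_fam m. c (a, b) ^ m (a, b)))"
proof (intro allI impI)
  fix n :: nat assume "n \<ge> 1"
  then obtain k where n: "n = Suc k" by (cases n) auto
  have "\<beta> $ n = (\<Sum>w\<in>forests 1 k. weight c w)"
    using beta_coeff_tree_sum[OF const0 eqn] n by simp
  also have "\<dots> = (\<Sum>m\<in>S_set n. \<Sum>w\<in>{w \<in> forests 1 k. node_counts w = m}. weight c w)"
    unfolding n node_counts_trees_image[symmetric] by (rule sum.image_gen[OF finite_forests])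
  also have "\<dots> = (\<Sum>m\<in>S_set n.
      fact (child_count m) / ((\<Prod>(a, b)\<in>supp_fam m. fact (m (a, b))) * fact (leaf_count m)) *
      (\<Prod>(a, b)\<in>supp_fam m. c (a, b) ^ m (a, b)))"
    using weight_tree_sum_fibre n by simp
  finally show "\<beta> $ n = (\<Sum>m\<in>S_set n.
       (fact (\<Sum>(a, b)\<in>supp_fam m. a * m (a, b)) /
        ((\<Prod>(a, b)\<in>supp_fam m. fact (m (a, b))) *
         fact (1 + (\<Sum>(a, b)\<in>supp_fam m. (a - 1) * m (a, b))))) *
       (\<Prod>(a, b)\<in>supp_fam m. c (a, b) ^ m (a, b)))"
    unfolding child_count_def leaf_count_def .
qed

end
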